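(* Let $p\in(0,1)$, $m\ge1$, and let $\tilde G^p_m$ be as defined in the context. For every integer $k\ge0$ such that the event has positive probability, conditional on $s(\tilde G^p_m)=k$, the graph $\tilde G^p_m$ is uniformly distributed on the set of connected graphs on $[m]$ with $m+k-1$ edges; in particular this conditional law does not depend on $p$.
   Context: Ordered depth-first search ${\bf oDFS}(G)$ for a connected graph $G$ on $[m]$: set $\mathcal O_0=(1)$, $\mathcal A_0=\emptyset$; for $i=0,\dots,m-1$ let $v_i$ be the first element of $\mathcal O_i$, $\mathcal N_i$ the neighbours of $v_i$ outside $\mathcal A_i\cup\mathcal O_i$, $\mathcal A_{i+1}=\mathcal A_i\cup\{v_i\}$, and $\mathcal O_{i+1}$ obtained by deleting $v_i$ from the front of $\mathcal O_i$ and placing $\mathcal N_i$ in increasing order at the front. Depth-first walk $X(i)=|\mathcal O_i|-1$; area of a tree $T$: $a(T)=\sum_{i=1}^{m-1}X(i)$; an edge $uv\notin E(T)$ is permitted by ${\bf oDFS}(T)$ if $u,v\in\mathcal O_i$ for some $i$. $\tilde T^p_m$ is a random tree on $[m]$ with $\mathbb P(\tilde T^p_m=T)\propto(1-p)^{-a(T)}$; $\tilde G^p_m$ is obtained from $\tilde T^p_m$ by adding each permitted edge independently with probability $p$. The surplus of a connected graph $G$ on $[m]$ is $s(G)=|E(G)|-(m-1)$. *)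

theory Defs
  imports "HOL-Probability.Probability"
begin

definition graph_on :: "nat \<Rightarrow> nat set set \<Rightarrow> bool" where
  "graph_on m E \<longleftrightarrow> (\<forall>e\<in>E. \<exists>u v. e = {u, v} \<and> u \<noteq> v \<and> u \<in> {1..m} \<and> v \<in> {1..m})"

definition adj :: "nat set set \<Rightarrow> nat \<Rightarrow> nat \<Rightarrow> bool" where
  "adj E u v \<longleftrightarrow> {u, v} \<in> E \<and> u \<noteq> v"

definition connected_graph :: "nat \<Rightarrow> nat set set \<Rightarrow> bool" where
  "connected_graph m E \<longleftrightarrow> graph_on m E \<and> (\<forall>u\<in>{1..m}. \<forall>v\<in>{1..m}. (adj E)\<^sup>*\<^sup>* u v)"

definition is_tree :: "nat \<Rightarrow> nat set set \<Rightarrow> bool" where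
  "is_tree m E \<longleftrightarrow> connected_graph m E \<and> card E = m - 1"

definition surplus :: "nat \<Rightarrow> nat set set \<Rightarrow> int" where
  "surplus m E = int (card E) - (int m - 1)"

text \<open>Ordered depth-first search.  A state is the pair (O_i, A_i) where O_i is the
  ordered list of open vertices and A_i the set of explored vertices.\<close>

definition odfs_step :: "nat set set \<Rightarrow> nat list \<times> nat set \<Rightarrow> nat list \<times> nat set" where
  "odfs_step E st = (let Op = fst st; A = snd st; v = hd Op;
      N = {u. adj E v u} - (A \<union> set Op)
    in (sorted_list_of_set N @ tl Op, insert v A))"

definition odfs_state :: "nat set set \<Rightarrow> nat \<Rightarrow> nat list \<times> nat set" where
  "odfs_state E i = (odfs_step E ^^ i) ([1], {})"

definition odfs_open :: "nat set set \<Rightarrow> nat \<Rightarrow> nat list" where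
  "odfs_open E i = fst (odfs_state E i)"

definition dfwalk :: "nat set set \<Rightarrow> nat \<Rightarrow> int" where
  "dfwalk E i = int (length (odfs_open E i)) - 1"

definition area :: "nat \<Rightarrow> nat set set \<Rightarrow> int" where
  "area m T = (\<Sum>i=1..m-1. dfwalk T i)"

definition permitted :: "nat \<Rightarrow> nat set set \<Rightarrow> nat set set" where
  "permitted m T = {{u, v} | u v. u \<noteq> v \<and> {u, v} \<notin> T \<and>
      (\<exists>i<m. u \<in> set (odfs_open T i) \<and> v \<in> set (odfs_open T i))}"

definition tree_weight :: "real \<Rightarrow> nat \<Rightarrow> nat set set \<Rightarrow> real" where
  "tree_weight p m T = (1 - p) powr (- real_of_int (area m T))"

definition tree_pmf :: "real \<Rightarrow> nat \<Rightarrow> nat set set pmf" where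
  "tree_pmf p m = embed_pmf (\<lambda>T. if is_tree m T
      then tree_weight p m T / (\<Sum>T'\<in>{T'. is_tree m T'}. tree_weight p m T') else 0)"

definition graph_pmf :: "real \<Rightarrow> nat \<Rightarrow> nat set set pmf" where
  "graph_pmf p m = do {
      T \<leftarrow> tree_pmf p m;
      f \<leftarrow> Pi_pmf (permitted m T) False (\<lambda>_. bernoulli_pmf p);
      return_pmf (T \<union> {e \<in> permitted m T. f e})
    }"

end

theory Submission
  imports Defs
begin

text \<open>
  The proof rests on the oDFS decomposition.  Running ordered depth-first search on a connected
  graph \<open>G\<close> produces a spanning tree \<open>dfs_tree G m\<close> (the edges along which vertices are first
  discovered), and \<open>G\<close> is that tree plus a set of edges permitted by it; conversely, adding
  permitted edges to a tree \<open>T\<close> does not change the run of oDFS, so the resulting graph has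
  oDFS tree \<open>T\<close>.  Hence each connected graph arises from exactly one tree.  Moreover the number
  of edges permitted by a tree equals its area \<open>a(T)\<close>, so the weight \<open>(1-p)^(-a(T))\<close> of the
  tree exactly cancels the factor \<open>(1-p)^(a(T)-k)\<close> for the absent permitted edges, and a
  connected graph with surplus \<open>k\<close> gets probability \<open>(p/(1-p))^k / Z\<close>.  Conditioning on the
  surplus therefore yields the uniform distribution.
\<close>

lemma adj_sym: "adj E u v = adj E v u"
  by (auto simp: adj_def insert_commute)

lemma graph_on_adj: "graph_on m E \<Longrightarrow> adj E u v \<Longrightarrow> u \<in> {1..m} \<and> v \<in> {1..m}"
  unfolding graph_on_def adj_def by (metis doubleton_eq_iff)

lemma graph_on_Un: "graph_on m A \<Longrightarrow> graph_on m B \<Longrightarrow> graph_on m (A \<union> B)"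
  unfolding graph_on_def by blast

lemma finite_graph: "graph_on m E \<Longrightarrow> finite E"
  unfolding graph_on_def by (rule finite_subset[of _ "Pow {1..m}"]) auto

lemma finite_graphs: "finite {E. graph_on m E \<and> Q E}"
  by (rule finite_subset[of _ "Pow (Pow {1..m})"]) (auto simp: graph_on_def)

lemma finite_trees: "finite {T. is_tree m T}"
  using finite_graphs[of m "\<lambda>T. is_tree m T"] by (simp add: is_tree_def connected_graph_def)

lemma rtranclp_closed:
  assumes "r\<^sup>*\<^sup>* a b" and "a \<in> R" and "\<forall>v\<in>R. \<forall>u. r v u \<longrightarrow> u \<in> R"
  shows "b \<in> R"
  using assms by (induction rule: rtranclp_induct) auto

lemma permittedE:
  assumes "e \<in> permitted m T"
  obtains u v j where "e = {u, v}" "u \<noteq> v" "e \<notin> T" "j < m"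
    "u \<in> set (odfs_open T j)" "v \<in> set (odfs_open T j)"
  using assms unfolding permitted_def by blast

lemma permittedI:
  assumes "u \<noteq> v" "{u, v} \<notin> T" "j < m" "u \<in> set (odfs_open T j)" "v \<in> set (odfs_open T j)"
  shows "{u, v} \<in> permitted m T"
  using assms unfolding permitted_def by blast

lemma permitted_disjoint: "permitted m T \<inter> T = {}"
  by (auto elim: permittedE)

section \<open>The run of ordered depth-first search\<close>

definition explored :: "nat set set \<Rightarrow> nat \<Rightarrow> nat set" where
  "explored E i = snd (odfs_state E i)"

definition current :: "nat set set \<Rightarrow> nat \<Rightarrow> nat" where
  "current E i = hd (odfs_open E i)"

definition seen :: "nat set set \<Rightarrow> nat \<Rightarrow> nat set" where
  "seen E i = explored E i \<union> set (odfs_open E i)"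

definition new_nbrs :: "nat set set \<Rightarrow> nat \<Rightarrow> nat set" where
  "new_nbrs E i = {u. adj E (current E i) u} - seen E i"

definition dfs_tree :: "nat set set \<Rightarrow> nat \<Rightarrow> nat set set" where
  "dfs_tree E i = (\<Union>j<i. (\<lambda>u. {current E j, u}) ` new_nbrs E j)"

lemma odfs_state_eq: "odfs_state E i = (odfs_open E i, explored E i)"
  by (simp add: odfs_open_def explored_def)

lemma odfs_open_0: "odfs_open E 0 = [1]"
  and explored_0: "explored E 0 = {}"
  by (simp_all add: odfs_open_def explored_def odfs_state_def)

lemma odfs_open_Suc:
  "odfs_open E (Suc i) = sorted_list_of_set (new_nbrs E i) @ tl (odfs_open E i)"
  by (simp add: odfs_open_def odfs_state_def odfs_step_def Let_def new_nbrs_def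
      current_def explored_def seen_def)

lemma explored_Suc: "explored E (Suc i) = insert (current E i) (explored E i)"
  by (simp add: odfs_open_def odfs_state_def odfs_step_def Let_def current_def explored_def)

lemma current_in_open: "odfs_open E i \<noteq> [] \<Longrightarrow> current E i \<in> set (odfs_open E i)"
  by (simp add: current_def)

lemma new_nbrs_disjoint: "new_nbrs E i \<inter> seen E i = {}"
  by (auto simp: new_nbrs_def)

lemma new_nbrs_range: "graph_on m E \<Longrightarrow> new_nbrs E i \<subseteq> {1..m}"
  unfolding new_nbrs_def using graph_on_adj by blast

lemma seen_Suc:
  assumes "odfs_open E i \<noteq> []" and "finite (new_nbrs E i)"
  shows "seen E (Suc i) = seen E i \<union> new_nbrs E i"
proof -
  have "set (odfs_open E i) = insert (current E i) (set (tl (odfs_open E i)))"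
    using assms(1) by (cases "odfs_open E i") (auto simp: current_def)
  then show ?thesis
    using assms(2) by (auto simp: seen_def odfs_open_Suc explored_Suc)
qed

lemma dfs_tree_0: "dfs_tree E 0 = {}"
  by (simp add: dfs_tree_def)

lemma dfs_tree_Suc: "dfs_tree E (Suc i) = dfs_tree E i \<union> (\<lambda>u. {current E i, u}) ` new_nbrs E i"
  by (simp add: dfs_tree_def lessThan_Suc Un_commute)

lemma dfs_tree_subset: "dfs_tree E i \<subseteq> E"
  unfolding dfs_tree_def new_nbrs_def adj_def by auto

text \<open>The run depends on the graph only through the new-neighbour sets: two graphs whose
  new neighbours agree along the run have the same run and the same exploration tree.\<close>
lemma odfs_state_determines:
  assumes "odfs_state F i = odfs_state E i"
  shows "odfs_open F i = odfs_open E i" "explored F i = explored E i"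
    "current F i = current E i" "seen F i = seen E i"
  using assms by (simp_all add: odfs_state_eq current_def seen_def)

lemma odfs_same_state:
  assumes same: "\<And>i. i < m \<Longrightarrow> odfs_state F i = odfs_state E i \<Longrightarrow> new_nbrs F i = new_nbrs E i"
  shows "i \<le> m \<Longrightarrow> odfs_state F i = odfs_state E i"
proof (induction i)
  case 0
  then show ?case by (simp add: odfs_state_def)
next
  case (Suc i)
  then have prev: "odfs_state F i = odfs_state E i" by simp
  have "new_nbrs F i = new_nbrs E i" using same Suc.prems prev by simp
  with odfs_state_determines[OF prev] show ?case
    by (simp add: odfs_state_eq odfs_open_Suc explored_Suc)
qed

lemma odfs_same_dfs_tree:
  assumes same: "\<And>i. i < m \<Longrightarrow> odfs_state F i = odfs_state E i \<Longrightarrow> new_nbrs F i = new_nbrs E i"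
  shows "dfs_tree F m = dfs_tree E m"
proof -
  have "current F j = current E j" "new_nbrs F j = new_nbrs E j" if j: "j < m" for j
  proof -
    have "odfs_state F j = odfs_state E j" using odfs_same_state[OF same] j by simp
    then show "current F j = current E j" "new_nbrs F j = new_nbrs E j"
      using odfs_state_determines(3) same j by blast+
  qed
  then show ?thesis unfolding dfs_tree_def by (intro SUP_cong) simp_all
qed

section \<open>Invariants of oDFS on a connected graph\<close>

definition search_invariant :: "nat \<Rightarrow> nat set set \<Rightarrow> nat \<Rightarrow> bool" where
  "search_invariant m E i \<longleftrightarrow>
     distinct (odfs_open E i) \<and> set (odfs_open E i) \<inter> explored E i = {}
     \<and> explored E i = current E ` {..<i} \<and> card (explored E i) = i
     \<and> seen E i \<subseteq> {1..m} \<and> 1 \<in> seen E i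
     \<and> (\<forall>v\<in>explored E i. \<forall>u. adj E v u \<longrightarrow> u \<in> seen E i)"

definition spanning_invariant :: "nat set set \<Rightarrow> nat \<Rightarrow> bool" where
  "spanning_invariant E i \<longleftrightarrow>
     card (dfs_tree E i) + 1 = card (seen E i) \<and> dfs_tree E i \<subseteq> Pow (seen E i)
     \<and> (\<forall>x\<in>seen E i. (adj (dfs_tree E i))\<^sup>*\<^sup>* 1 x)"

lemma search_invariant_0: "1 \<le> m \<Longrightarrow> search_invariant m E 0"
  by (simp add: search_invariant_def seen_def odfs_open_0 explored_0)

lemma spanning_invariant_0: "spanning_invariant E 0"
  by (simp add: spanning_invariant_def seen_def odfs_open_0 explored_0 dfs_tree_0)

text \<open>In a connected graph the open list cannot run empty before all \<open>m\<close> vertices are explored,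
  because the explored set would then be closed under adjacency.\<close>
lemma invariant_open_nonempty:
  assumes "connected_graph m E" and "search_invariant m E i" and "i < m"
  shows "odfs_open E i \<noteq> []"
proof
  assume empty: "odfs_open E i = []"
  have "{1..m} \<subseteq> explored E i"
  proof
    fix u assume "u \<in> {1..m}"
    then have "(adj E)\<^sup>*\<^sup>* 1 u"
      using assms(1,3) unfolding connected_graph_def by auto
    then show "u \<in> explored E i"
      by (rule rtranclp_closed) (use assms(2) empty in \<open>auto simp: search_invariant_def seen_def\<close>)
  qed
  moreover have "finite (explored E i)" using assms(2) unfolding search_invariant_def by simp
  ultimately have "m \<le> card (explored E i)" using card_mono[of "explored E i" "{1..m}"] by simp
  then show False
    using assms(2,3) unfolding search_invariant_def by auto
qed

lemma search_invariant_Suc: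
  assumes graph: "graph_on m E" and inv: "search_invariant m E i"
    and nonempty: "odfs_open E i \<noteq> []"
  shows "search_invariant m E (Suc i)"
proof -
  let ?O = "odfs_open E i" and ?v = "current E i" and ?N = "new_nbrs E i"
  have N_range: "?N \<subseteq> {1..m}" using new_nbrs_range[OF graph] .
  then have seen': "seen E (Suc i) = seen E i \<union> ?N"
    using seen_Suc[OF nonempty] finite_subset by blast
  have v_open: "?v \<in> set ?O" using current_in_open[OF nonempty] .
  have tl_open: "set (tl ?O) = set ?O - {?v}"
    using inv nonempty unfolding search_invariant_def current_def
    by (cases ?O) auto
  have N_fresh: "?N \<inter> seen E i = {}" by (rule new_nbrs_disjoint)
  have fin_N: "finite ?N" using N_range finite_subset by blast
  have fin_explored: "finite (explored E i)"
    using inv unfolding search_invariant_def by auto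
  show ?thesis
    using inv unfolding search_invariant_def
  proof (elim conjE, intro conjI)
    assume "distinct ?O" "set ?O \<inter> explored E i = {}"
      "explored E i = current E ` {..<i}" "card (explored E i) = i"
      "seen E i \<subseteq> {1..m}" "1 \<in> seen E i"
      "\<forall>v\<in>explored E i. \<forall>u. adj E v u \<longrightarrow> u \<in> seen E i"
    note prev = this
    show "distinct (odfs_open E (Suc i))"
      using prev(1) N_fresh fin_N tl_open by (auto simp: odfs_open_Suc distinct_tl seen_def)
    show "set (odfs_open E (Suc i)) \<inter> explored E (Suc i) = {}"
      using prev(1,2) N_fresh fin_N tl_open v_open by (auto simp: odfs_open_Suc explored_Suc seen_def)
    show "explored E (Suc i) = current E ` {..<Suc i}"
      using prev(3) by (auto simp: explored_Suc lessThan_Suc)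
    show "card (explored E (Suc i)) = Suc i"
      using prev(2,4) v_open fin_explored by (auto simp: explored_Suc card_insert_if)
    show "seen E (Suc i) \<subseteq> {1..m}" "1 \<in> seen E (Suc i)"
      using prev(5,6) seen' N_range by auto
    show "\<forall>v\<in>explored E (Suc i). \<forall>u. adj E v u \<longrightarrow> u \<in> seen E (Suc i)"
      using prev(7) seen' by (auto simp: explored_Suc new_nbrs_def)
  qed
qed

lemma spanning_invariant_Suc:
  assumes inv: "spanning_invariant E i" and nonempty: "odfs_open E i \<noteq> []"
    and fin_seen: "finite (seen E i)" and fin_N: "finite (new_nbrs E i)"
  shows "spanning_invariant E (Suc i)"
proof -
  let ?v = "current E i" and ?N = "new_nbrs E i" and ?T = "dfs_tree E i"
  have seen': "seen E (Suc i) = seen E i \<union> ?N" using seen_Suc[OF nonempty fin_N] .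
  have v_seen: "?v \<in> seen E i" using current_in_open[OF nonempty] by (simp add: seen_def)
  have N_fresh: "?N \<inter> seen E i = {}" by (rule new_nbrs_disjoint)
  have T_seen: "?T \<subseteq> Pow (seen E i)" and card_T: "card ?T + 1 = card (seen E i)"
    and reach: "\<forall>x\<in>seen E i. (adj ?T)\<^sup>*\<^sup>* 1 x"
    using inv unfolding spanning_invariant_def by auto
  have fin_T: "finite ?T" using T_seen fin_seen by (meson finite_Pow_iff finite_subset)
  have new_edges: "?T \<inter> (\<lambda>u. {?v, u}) ` ?N = {}" using T_seen N_fresh by fastforce
  have inj: "inj_on (\<lambda>u. {?v, u}) ?N"
    by (rule inj_onI) (metis N_fresh v_seen disjoint_iff doubleton_eq_iff)
  have "card (dfs_tree E (Suc i)) = card ?T + card ?N"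
    unfolding dfs_tree_Suc using fin_T fin_N new_edges inj
    by (simp add: card_Un_disjoint card_image)
  moreover have "card (seen E (Suc i)) = card (seen E i) + card ?N"
    unfolding seen' using fin_seen fin_N N_fresh by (simp add: card_Un_disjoint Int_commute)
  moreover have "dfs_tree E (Suc i) \<subseteq> Pow (seen E (Suc i))"
    using T_seen v_seen by (auto simp: dfs_tree_Suc seen')
  moreover have "(adj (dfs_tree E (Suc i)))\<^sup>*\<^sup>* 1 x" if x: "x \<in> seen E (Suc i)" for x
  proof -
    have mono: "(adj ?T)\<^sup>*\<^sup>* \<le> (adj (dfs_tree E (Suc i)))\<^sup>*\<^sup>*"
      by (rule rtranclp_mono) (auto simp: adj_def dfs_tree_Suc)
    show ?thesis
    proof (cases "x \<in> seen E i")
      case True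
      then show ?thesis using reach mono by blast
    next
      case False
      then have "x \<in> ?N" using x seen' by auto
      then have "adj (dfs_tree E (Suc i)) ?v x"
        using N_fresh v_seen by (auto simp: adj_def dfs_tree_Suc)
      moreover have "(adj (dfs_tree E (Suc i)))\<^sup>*\<^sup>* 1 ?v" using reach mono v_seen by blast
      ultimately show ?thesis by simp
    qed
  qed
  ultimately show ?thesis
    using card_T unfolding spanning_invariant_def by auto
qed

locale connected_odfs =
  fixes m :: nat and G :: "nat set set"
  assumes connected: "connected_graph m G" and m_pos: "1 \<le> m"
begin

lemma graph: "graph_on m G"
  using connected unfolding connected_graph_def by simp

lemma finite_new_nbrs: "finite (new_nbrs G i)"
  using new_nbrs_range[OF graph] by (rule finite_subset) simp

lemma invariants: "i \<le> m \<Longrightarrow> search_invariant m G i \<and> spanning_invariant G i"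
proof (induction i)
  case 0
  show ?case using m_pos by (simp add: search_invariant_0 spanning_invariant_0)
next
  case (Suc i)
  then have inv: "search_invariant m G i" "spanning_invariant G i" by auto
  have nonempty: "odfs_open G i \<noteq> []"
    using invariant_open_nonempty[OF connected inv(1)] Suc.prems by simp
  have "finite (seen G i)"
    using inv(1) unfolding search_invariant_def by (meson finite_atLeastAtMost finite_subset)
  then show ?case
    using search_invariant_Suc[OF graph inv(1) nonempty] spanning_invariant_Suc[OF inv(2) nonempty _ finite_new_nbrs]
    by blast
qed

lemma search_inv: "i \<le> m \<Longrightarrow> search_invariant m G i"
  using invariants by blast

lemma open_nonempty: "i < m \<Longrightarrow> odfs_open G i \<noteq> []"
  using invariant_open_nonempty[OF connected search_inv] by simp

lemma current_open: "i < m \<Longrightarrow> current G i \<in> set (odfs_open G i)"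
  using open_nonempty by (rule current_in_open)

lemma explored_eq: "i \<le> m \<Longrightarrow> explored G i = current G ` {..<i}"
  using search_inv unfolding search_invariant_def by blast

lemma open_explored_disjoint: "i \<le> m \<Longrightarrow> set (odfs_open G i) \<inter> explored G i = {}"
  using search_inv unfolding search_invariant_def by blast

lemma distinct_open: "i \<le> m \<Longrightarrow> distinct (odfs_open G i)"
  using search_inv unfolding search_invariant_def by blast

lemma open_range: "i \<le> m \<Longrightarrow> set (odfs_open G i) \<subseteq> {1..m}"
  using search_inv unfolding search_invariant_def seen_def by blast

lemma current_explored: "j < i \<Longrightarrow> i \<le> m \<Longrightarrow> current G j \<in> explored G i"
  using explored_eq by auto

lemma current_not_explored: "i < m \<Longrightarrow> current G i \<notin> explored G i"
  using current_open[of i] open_explored_disjoint[of i] by auto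

lemma current_inj: "i < m \<Longrightarrow> j < m \<Longrightarrow> current G i = current G j \<Longrightarrow> i = j"
  by (metis current_explored current_not_explored less_imp_le linorder_neqE_nat)

lemma current_explored_iff:
  assumes i: "i \<le> m" and j: "j < m"
  shows "current G j \<in> explored G i \<longleftrightarrow> j < i"
proof
  assume "current G j \<in> explored G i"
  then obtain l where "l < i" "current G j = current G l" using explored_eq[OF i] by auto
  then show "j < i" using current_inj[of j l] i j by simp
qed (use current_explored i in blast)

lemma current_not_open_tl: "i < m \<Longrightarrow> current G i \<notin> set (tl (odfs_open G i))"
  using distinct_open[of i] open_nonempty[of i] by (cases "odfs_open G i") (auto simp: current_def)

lemma seen_mono: "i \<le> j \<Longrightarrow> j \<le> m \<Longrightarrow> seen G i \<subseteq> seen G j"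
proof (induction j rule: dec_induct)
  case (step n)
  then have "seen G (Suc n) = seen G n \<union> new_nbrs G n"
    using seen_Suc[OF open_nonempty finite_new_nbrs] by simp
  then show ?case using step by auto
qed simp

lemma explored_final: "explored G m = {1..m}"
proof -
  have "explored G m \<subseteq> {1..m}" "card (explored G m) = m"
    using search_inv[of m] unfolding search_invariant_def seen_def by auto
  then show ?thesis by (simp add: card_subset_eq)
qed

lemma current_surj: "x \<in> {1..m} \<Longrightarrow> \<exists>i<m. x = current G i"
  using explored_final explored_eq[of m] by auto

lemma dfs_tree_is_tree: "is_tree m (dfs_tree G m)"
proof -
  have seen_final: "seen G m = {1..m}"
    using explored_final open_explored_disjoint[of m] open_range[of m]
    by (auto simp: seen_def)
  have "spanning_invariant G m" using invariants[of m] by simp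
  then have card: "card (dfs_tree G m) + 1 = m"
    and reach: "\<forall>x\<in>{1..m}. (adj (dfs_tree G m))\<^sup>*\<^sup>* 1 x"
    unfolding spanning_invariant_def seen_final by simp_all
  have "graph_on m (dfs_tree G m)"
    using dfs_tree_subset[of G m] graph unfolding graph_on_def by blast
  moreover have "(adj (dfs_tree G m))\<^sup>*\<^sup>* u v" if "u \<in> {1..m}" "v \<in> {1..m}" for u v
  proof -
    have "symp (adj (dfs_tree G m))" by (auto simp: symp_def adj_sym)
    then have "(adj (dfs_tree G m))\<^sup>*\<^sup>* u 1"
      using reach that(1) by (meson symp_rtranclp sympD)
    then show ?thesis using reach that(2) by (meson rtranclp_trans)
  qed
  ultimately have "connected_graph m (dfs_tree G m)"
    unfolding connected_graph_def by blast
  then show ?thesis using card unfolding is_tree_def by simp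
qed

lemma co_open_seen:
  assumes "i < m" "j < m" "current G i \<in> set (odfs_open G j)" "u \<in> set (odfs_open G j)"
  shows "u \<in> seen G i"
proof (cases "j \<le> i")
  case True
  then show ?thesis using seen_mono[of j i] assms by (auto simp: seen_def)
next
  case False
  then show ?thesis
    using current_explored[of i j] open_explored_disjoint[of j] assms by auto
qed

lemma permitted_graph_on: "graph_on m (permitted m G)"
  unfolding graph_on_def
proof
  fix e assume "e \<in> permitted m G"
  then obtain u v j where "e = {u, v}" "u \<noteq> v" "j < m"
    "u \<in> set (odfs_open G j)" "v \<in> set (odfs_open G j)"
    by (rule permittedE)
  moreover from this have "u \<in> {1..m}" "v \<in> {1..m}" using open_range[of j] by auto
  ultimately show "\<exists>u v. e = {u, v} \<and> u \<noteq> v \<and> u \<in> {1..m} \<and> v \<in> {1..m}"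
    by blast
qed

lemma finite_permitted: "finite (permitted m G)"
  using finite_graph[OF permitted_graph_on] .

text \<open>A permitted edge at the current vertex leads to an already seen vertex,
  so oDFS never uses it.\<close>
lemma permitted_edge_seen:
  assumes i: "i < m" and edge: "{current G i, u} \<in> permitted m G"
  shows "u \<in> seen G i"
proof -
  obtain a b j where ab: "{current G i, u} = {a, b}" "j < m"
    "a \<in> set (odfs_open G j)" "b \<in> set (odfs_open G j)"
    using edge by (rule permittedE)
  then have "current G i \<in> set (odfs_open G j)" "u \<in> set (odfs_open G j)"
    by (auto simp: doubleton_eq_iff)
  then show ?thesis using co_open_seen[OF i ab(2)] by blast
qed

section \<open>The oDFS decomposition\<close>

lemma dfs_tree_new_nbrs:
  assumes i: "i < m" and same: "odfs_state (dfs_tree G m) i = odfs_state G i"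
  shows "new_nbrs (dfs_tree G m) i = new_nbrs G i"
proof -
  let ?T = "dfs_tree G m" and ?v = "current G i"
  note st = odfs_state_determines[OF same]
  have "u \<in> new_nbrs G i" if u: "u \<in> new_nbrs ?T i" for u
  proof -
    have uT: "{?v, u} \<in> ?T" "?v \<noteq> u" "u \<notin> seen G i"
      using u unfolding new_nbrs_def st adj_def by auto
    then obtain j w where jw: "{?v, u} = {current G j, w}" "j < m" "w \<in> new_nbrs G j"
      unfolding dfs_tree_def by auto
    then consider "?v = current G j" "u = w" | "?v = w" "u = current G j"
      by (auto simp: doubleton_eq_iff)
    then show ?thesis
    proof cases
      case 1
      then show ?thesis using current_inj[OF i jw(2)] jw(3) by simp
    next
      case 2
      then have "?v \<notin> seen G j" using jw(3) unfolding new_nbrs_def by auto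
      moreover have "\<not> j < i" using current_explored[of j i] i 2 uT(3) by (auto simp: seen_def)
      ultimately show ?thesis using seen_mono[of i j] jw(2) current_open[OF i] by (auto simp: seen_def)
    qed
  qed
  moreover have "u \<in> new_nbrs ?T i" if u: "u \<in> new_nbrs G i" for u
  proof -
    have "{?v, u} \<in> ?T" unfolding dfs_tree_def using i u by auto
    then show ?thesis using u unfolding new_nbrs_def st adj_def by auto
  qed
  ultimately show ?thesis by blast
qed

lemma dfs_tree_run: "i \<le> m \<Longrightarrow> odfs_state (dfs_tree G m) i = odfs_state G i"
  using odfs_same_state[OF dfs_tree_new_nbrs] .

lemma nontree_edge_open:
  assumes ij: "i < j" "j < m" and edge: "{current G i, current G j} \<in> G - dfs_tree G m"
  shows "current G j \<in> set (odfs_open G i)"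
proof -
  have i: "i < m" using ij by simp
  have "current G i \<noteq> current G j" using current_inj[OF i ij(2)] ij by auto
  then have "current G j \<in> new_nbrs G i \<or> current G j \<in> seen G i"
    using edge by (auto simp: new_nbrs_def adj_def)
  moreover have "current G j \<notin> new_nbrs G i" using edge i unfolding dfs_tree_def by auto
  moreover have "current G j \<notin> explored G i" using current_explored_iff[of i j] ij by simp
  ultimately show ?thesis by (simp add: seen_def)
qed

lemma nontree_edges_permitted: "G - dfs_tree G m \<subseteq> permitted m (dfs_tree G m)"
proof
  let ?T = "dfs_tree G m"
  have key: "{current G i, current G j} \<in> permitted m ?T"
    if ij: "i < j" "j < m" and edge: "{current G i, current G j} \<in> G - ?T" for i j
  proof -
    have i: "i < m" using ij by simp
    have "odfs_open ?T i = odfs_open G i"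
      using odfs_state_determines(1)[OF dfs_tree_run] i by simp
    then have "current G i \<in> set (odfs_open ?T i)" "current G j \<in> set (odfs_open ?T i)"
      using current_open[OF i] nontree_edge_open[OF ij edge] by simp_all
    moreover have "current G i \<noteq> current G j" using current_inj[OF i ij(2)] ij by auto
    ultimately show ?thesis using permittedI[of _ _ ?T i m] i edge by blast
  qed
  fix e assume e: "e \<in> G - ?T"
  then obtain a b where ab: "e = {a, b}" "a \<noteq> b" "a \<in> {1..m}" "b \<in> {1..m}"
    using graph unfolding graph_on_def by blast
  obtain i j where i: "i < m" "a = current G i" and j: "j < m" "b = current G j"
    using current_surj ab(3,4) by blast
  have "i \<noteq> j" using ab(2) i j by auto
  then consider "i < j" | "j < i" by linarith
  then show "e \<in> permitted m ?T"
  proof cases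
    case 1
    then show ?thesis using key[of i j] e ab(1) i j by simp
  next
    case 2
    have "e = {b, a}" using ab(1) by blast
    then show ?thesis using key[of j i] e 2 i j by simp
  qed
qed

end

lemma tree_connected_odfs: "is_tree m T \<Longrightarrow> 1 \<le> m \<Longrightarrow> connected_odfs m T"
  by unfold_locales (simp_all add: is_tree_def)

lemma dfs_tree_of_tree:
  assumes T: "is_tree m T" and m: "1 \<le> m"
  shows "dfs_tree T m = T"
proof -
  interpret connected_odfs m T using tree_connected_odfs[OF T m] .
  have "card (dfs_tree T m) = card T" using dfs_tree_is_tree T by (simp add: is_tree_def)
  then show ?thesis
    using dfs_tree_subset finite_graph[OF graph] card_subset_eq by blast
qed

lemma permitted_edges_invisible:
  assumes T: "is_tree m T" and m: "1 \<le> m" and S: "S \<subseteq> permitted m T" and i: "i < m"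
    and same: "odfs_state (T \<union> S) i = odfs_state T i"
  shows "new_nbrs (T \<union> S) i = new_nbrs T i"
proof -
  interpret connected_odfs m T using tree_connected_odfs[OF T m] .
  note st = odfs_state_determines[OF same]
  have "u \<in> seen T i" if "{current T i, u} \<in> S" for u
    using permitted_edge_seen[OF i] that S by blast
  then show ?thesis unfolding new_nbrs_def st by (auto simp: adj_def)
qed

lemma permitted_extension:
  assumes T: "is_tree m T" and m: "1 \<le> m" and TG: "T \<subseteq> G" and GT: "G - T \<subseteq> permitted m T"
  shows "connected_graph m G \<and> dfs_tree G m = T"
proof -
  interpret connected_odfs m T using tree_connected_odfs[OF T m] .
  have G_eq: "T \<union> (G - T) = G" using TG by auto
  have "new_nbrs G i = new_nbrs T i" if "i < m" "odfs_state G i = odfs_state T i" for i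
    using permitted_edges_invisible[OF T m GT that(1)] that(2) unfolding G_eq by blast
  then have "dfs_tree G m = T"
    using odfs_same_dfs_tree dfs_tree_of_tree[OF T m] by metis
  moreover have "graph_on m G"
    using graph_on_Un[OF graph permitted_graph_on] TG GT
    unfolding graph_on_def by blast
  moreover have "(adj T)\<^sup>*\<^sup>* \<le> (adj G)\<^sup>*\<^sup>*"
    by (rule rtranclp_mono) (use TG in \<open>auto simp: adj_def\<close>)
  ultimately show ?thesis
    using connected unfolding connected_graph_def by blast
qed

theorem odfs_decomposition:
  assumes m: "1 \<le> m" and T: "is_tree m T"
  shows "T \<subseteq> G \<and> G - T \<subseteq> permitted m T \<longleftrightarrow> connected_graph m G \<and> dfs_tree G m = T"
proof
  assume G: "connected_graph m G \<and> dfs_tree G m = T"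
  then interpret connected_odfs m G using m by unfold_locales simp_all
  show "T \<subseteq> G \<and> G - T \<subseteq> permitted m T"
    using nontree_edges_permitted dfs_tree_subset[of G m] G by simp
qed (use permitted_extension[OF T m] in blast)

section \<open>Permitted edges are counted by the area\<close>

text \<open>The pending pairs \<open>(i, w)\<close>: at step \<open>i\<close> the vertex \<open>w\<close> is open but is not the vertex \<open>v_i\<close>
  being explored.\<close>
definition pending :: "nat \<Rightarrow> nat set set \<Rightarrow> (nat \<times> nat) set" where
  "pending m E = Sigma {..<m} (\<lambda>i. set (tl (odfs_open E i)))"

definition pair_edge :: "nat set set \<Rightarrow> nat \<times> nat \<Rightarrow> nat set" where
  "pair_edge E iw = {current E (fst iw), snd iw}"

context connected_odfs
begin

lemma open_pair_not_tree_edge: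
  assumes i: "i < m" and w: "w \<in> set (odfs_open G i)"
  shows "{current G i, w} \<notin> dfs_tree G m"
proof
  assume "{current G i, w} \<in> dfs_tree G m"
  then obtain j u where ju: "{current G i, w} = {current G j, u}" "j < m" "u \<in> new_nbrs G j"
    unfolding dfs_tree_def by auto
  then consider "current G i = current G j" "w = u" | "current G i = u" "w = current G j"
    by (auto simp: doubleton_eq_iff)
  then show False
  proof cases
    case 1
    then show False using current_inj[OF i ju(2)] ju(3) w new_nbrs_disjoint[of G i]
      by (auto simp: seen_def)
  next
    case 2
    have "\<not> j < i" using current_explored[of j i] i w open_explored_disjoint[of i] 2 by auto
    then have "seen G i \<subseteq> seen G j" using seen_mono ju(2) by simp
    then show False using current_open[OF i] ju(3) 2 new_nbrs_disjoint[of G j]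
      by (auto simp: seen_def)
  qed
qed

lemma co_open_pending:
  assumes ab: "a < b" "b < m" and j: "j < m"
    and open_a: "current G a \<in> set (odfs_open G j)" and open_b: "current G b \<in> set (odfs_open G j)"
  shows "(a, current G b) \<in> pending m G"
proof -
  have a: "a < m" using ab by simp
  have "current G b \<in> seen G a" using co_open_seen[OF a j open_a open_b] .
  moreover have "current G b \<notin> explored G a" using current_explored_iff[of a b] ab by simp
  ultimately have "current G b \<in> set (odfs_open G a)" by (simp add: seen_def)
  moreover have "current G b \<noteq> current G a" using current_inj[OF a ab(2)] ab by auto
  ultimately have "current G b \<in> set (tl (odfs_open G a))"
    by (cases "odfs_open G a") (auto simp: current_def)
  then show ?thesis using a by (simp add: pending_def)
qed

lemma pair_edge_inj: "inj_on (pair_edge G) (pending m G)"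
proof (rule inj_onI)
  fix x y assume x: "x \<in> pending m G" and y: "y \<in> pending m G" and eq: "pair_edge G x = pair_edge G y"
  obtain i w where xi: "x = (i, w)" "i < m" "w \<in> set (tl (odfs_open G i))"
    using x unfolding pending_def by auto
  obtain j w' where yj: "y = (j, w')" "j < m" "w' \<in> set (tl (odfs_open G j))"
    using y unfolding pending_def by auto
  have w: "w \<in> set (odfs_open G i)" "w' \<in> set (odfs_open G j)"
    using xi(3) yj(3) by (auto intro: list.set_sel(2))
  from eq consider "current G i = current G j" "w = w'" | "current G i = w'" "w = current G j"
    unfolding pair_edge_def xi yj by (auto simp: doubleton_eq_iff)
  then show "x = y"
  proof cases
    case 1
    then show ?thesis using current_inj[OF xi(2) yj(2)] xi yj by simp
  next
    case 2
    have "\<not> j < i" using current_explored[of j i] open_explored_disjoint[of i] w xi 2 by auto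
    moreover have "\<not> i < j" using current_explored[of i j] open_explored_disjoint[of j] w yj 2 by auto
    ultimately show ?thesis using current_not_open_tl[OF xi(2)] xi(3) 2 by simp
  qed
qed

text \<open>The number of pending pairs is the area: step \<open>i\<close> contributes \<open>|O_i| - 1 = X(i)\<close>,
  and step \<open>0\<close> contributes nothing since \<open>O_0 = [1]\<close>.\<close>
lemma card_pending: "int (card (pending m G)) = area m G"
proof -
  have range: "{..<m} = insert 0 {1..m-1}" using m_pos by auto
  have step: "int (length (tl (odfs_open G i))) = dfwalk G i" if "i \<in> {1..m-1}" for i
  proof -
    have "i < m" using that m_pos by auto
    then show ?thesis using open_nonempty[of i] by (cases "odfs_open G i") (auto simp: dfwalk_def)
  qed
  have "card (pending m G) = (\<Sum>i<m. length (tl (odfs_open G i)))"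
    unfolding pending_def
    by (subst card_SigmaI) (simp_all add: distinct_card distinct_tl distinct_open)
  also have "\<dots> = (\<Sum>i=1..m-1. length (tl (odfs_open G i)))"
    unfolding range by (simp add: odfs_open_0)
  finally show ?thesis
    unfolding area_def using step by (simp add: of_nat_sum)
qed

end

lemma permitted_eq_pending:
  assumes T: "is_tree m T" and m: "1 \<le> m"
  shows "permitted m T = pair_edge T ` pending m T"
proof
  interpret connected_odfs m T using tree_connected_odfs[OF T m] .
  show "pair_edge T ` pending m T \<subseteq> permitted m T"
  proof
    fix e assume "e \<in> pair_edge T ` pending m T"
    then obtain i w where e: "e = {current T i, w}" "i < m" "w \<in> set (tl (odfs_open T i))"
      unfolding pending_def pair_edge_def by auto
    have "w \<in> set (odfs_open T i)" using e(3) by (auto intro: list.set_sel(2))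
    moreover have "current T i \<noteq> w" using current_not_open_tl[OF e(2)] e(3) by auto
    moreover have "{current T i, w} \<notin> T"
      using open_pair_not_tree_edge[OF e(2) calculation(1)] dfs_tree_of_tree[OF T m] by simp
    ultimately show "e \<in> permitted m T"
      using permittedI[OF _ _ e(2) current_open[OF e(2)]] e(1) by blast
  qed
  show "permitted m T \<subseteq> pair_edge T ` pending m T"
  proof
    fix e assume "e \<in> permitted m T"
    then obtain u v j where e: "e = {u, v}" "u \<noteq> v" "j < m"
      "u \<in> set (odfs_open T j)" "v \<in> set (odfs_open T j)"
      by (rule permittedE)
    obtain a b where a: "a < m" "u = current T a" and b: "b < m" "v = current T b"
      using current_surj open_range[of j] e by (metis subsetD less_imp_le)
    have "a \<noteq> b" using a b e(2) by auto
    then consider "a < b" | "b < a" by linarith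
    then show "e \<in> pair_edge T ` pending m T"
    proof cases
      case 1
      then have "(a, v) \<in> pending m T" using co_open_pending[OF 1 b(1) e(3)] a b e by simp
      then show ?thesis using e(1) a by (force simp: pair_edge_def)
    next
      case 2
      then have "(b, u) \<in> pending m T" using co_open_pending[OF 2 a(1) e(3)] a b e by simp
      then show ?thesis using e(1) b by (force simp: pair_edge_def insert_commute)
    qed
  qed
qed

lemma card_permitted:
  assumes T: "is_tree m T" and m: "1 \<le> m"
  shows "int (card (permitted m T)) = area m T"
proof -
  interpret connected_odfs m T using tree_connected_odfs[OF T m] .
  show ?thesis
    using permitted_eq_pending[OF T m] card_image[OF pair_edge_inj] card_pending by simp
qed

section \<open>Random subsets\<close>

lemma pmf_map_inj_on_superset:
  assumes inj: "inj_on f A" and sub: "set_pmf M \<subseteq> A" and x: "x \<in> A"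
  shows "pmf (map_pmf f M) (f x) = pmf M x"
proof (cases "x \<in> set_pmf M")
  case True
  then show ?thesis by (rule pmf_map_inj[OF inj_on_subset[OF inj sub]])
next
  case False
  then have "f x \<notin> f ` set_pmf M" using inj sub x by (auto dest: inj_onD)
  then show ?thesis using False by (simp add: pmf_map_outside set_pmf_iff)
qed

definition random_subset :: "real \<Rightarrow> 'a set \<Rightarrow> 'a set pmf" where
  "random_subset p P = map_pmf (\<lambda>f. {e \<in> P. f e}) (Pi_pmf P False (\<lambda>_. bernoulli_pmf p))"

lemma set_random_subset: "finite P \<Longrightarrow> set_pmf (random_subset p P) \<subseteq> Pow P"
  by (auto simp: random_subset_def)

lemma pmf_random_subset:
  assumes P: "finite P" and p: "0 \<le> p" "p \<le> 1" and S: "S \<subseteq> P"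
  shows "pmf (random_subset p P) S = p ^ card S * (1 - p) ^ (card P - card S)"
proof -
  let ?D = "{f. \<forall>x. x \<notin> P \<longrightarrow> f x = False}"
  have inj: "inj_on (\<lambda>f. {e \<in> P. f e}) ?D"
    by (rule inj_onI) (auto simp: set_eq_iff fun_eq_iff)
  have indicator: "(\<lambda>e. e \<in> S) \<in> ?D" and image: "{e \<in> P. e \<in> S} = S"
    using S by auto
  have "pmf (random_subset p P) S = pmf (Pi_pmf P False (\<lambda>_. bernoulli_pmf p)) (\<lambda>e. e \<in> S)"
    using pmf_map_inj_on_superset[OF inj set_Pi_pmf_subset[OF P] indicator]
    unfolding random_subset_def image .
  also have "\<dots> = (\<Prod>e\<in>P. if e \<in> S then p else 1 - p)"
    using P S p by (subst pmf_Pi') (auto intro!: prod.cong)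
  also have "\<dots> = p ^ card S * (1 - p) ^ (card P - card S)"
    using P S by (simp add: prod.If_cases Int_absorb1 Diff_eq[symmetric] card_Diff_subset finite_subset)
  finally show ?thesis .
qed

lemma pmf_random_extension:
  assumes P: "finite P" and p: "0 \<le> p" "p \<le> 1" and disj: "P \<inter> T = {}"
  shows "pmf (map_pmf (\<lambda>S. T \<union> S) (random_subset p P)) G =
    (if T \<subseteq> G \<and> G - T \<subseteq> P then p ^ card (G - T) * (1 - p) ^ (card P - card (G - T)) else 0)"
proof -
  have inj: "inj_on (\<lambda>S. T \<union> S) (Pow P)"
    using disj by (intro inj_onI) blast
  show ?thesis
  proof (cases "T \<subseteq> G \<and> G - T \<subseteq> P")
    case True
    then have "G = T \<union> (G - T)" by auto
    then have "pmf (map_pmf (\<lambda>S. T \<union> S) (random_subset p P)) G = pmf (random_subset p P) (G - T)"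
      using pmf_map_inj_on_superset[OF inj set_random_subset[OF P]] True by (metis PowI)
    then show ?thesis using pmf_random_subset[OF P p] True by simp
  next
    case False
    then have "G \<notin> (\<lambda>S. T \<union> S) ` set_pmf (random_subset p P)"
      using set_random_subset[OF P] disj by blast
    then show ?thesis unfolding if_not_P[OF False] by (rule pmf_map_outside)
  qed
qed

section \<open>The law of the random graph\<close>

definition tree_partition :: "real \<Rightarrow> nat \<Rightarrow> real" where
  "tree_partition p m = (\<Sum>T\<in>{T. is_tree m T}. tree_weight p m T)"

text \<open>Trees on \<open>[m]\<close> exist: take the exploration tree of the complete graph.\<close>
lemma tree_exists:
  assumes m: "1 \<le> m"
  shows "\<exists>T. is_tree m T"
proof -
  define K where "K = {{u, v} | u v. u \<noteq> v \<and> u \<in> {1..m} \<and> v \<in> {1..m}}"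
  have "graph_on m K" unfolding K_def graph_on_def by blast
  moreover have "adj K u v" if "u \<in> {1..m}" "v \<in> {1..m}" "u \<noteq> v" for u v
    using that unfolding adj_def K_def by blast
  then have "(adj K)\<^sup>*\<^sup>* u v" if "u \<in> {1..m}" "v \<in> {1..m}" for u v
    using that by (cases "u = v") auto
  ultimately have "connected_odfs m K"
    using m by unfold_locales (auto simp: connected_graph_def)
  then show ?thesis using connected_odfs.dfs_tree_is_tree by blast
qed

lemma tree_partition_pos:
  assumes "0 < p" "p < 1" "1 \<le> m"
  shows "0 < tree_partition p m"
proof -
  obtain T where "is_tree m T" using tree_exists assms(3) by blast
  then show ?thesis
    unfolding tree_partition_def using finite_trees assms(1,2)
    by (intro sum_pos) (auto simp: tree_weight_def)
qed

lemma pmf_tree_pmf: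
  assumes p: "0 < p" "p < 1" and m: "1 \<le> m"
  shows "pmf (tree_pmf p m) T = (if is_tree m T then tree_weight p m T / tree_partition p m else 0)"
proof -
  let ?f = "\<lambda>T. if is_tree m T then tree_weight p m T / tree_partition p m else 0"
  have Z: "0 < tree_partition p m" using tree_partition_pos[OF p m] .
  have nonneg: "0 \<le> ?f T" for T using Z by (simp add: tree_weight_def)
  have "(\<integral>\<^sup>+T. ennreal (?f T) \<partial>count_space UNIV) = (\<Sum>T\<in>{T. is_tree m T}. ennreal (?f T))"
    by (rule nn_integral_count_space') (use finite_trees in auto)
  also have "\<dots> = ennreal (\<Sum>T\<in>{T. is_tree m T}. ?f T)"
    by (rule sum_ennreal) (rule nonneg)
  also have "(\<Sum>T\<in>{T. is_tree m T}. ?f T) = (\<Sum>T\<in>{T. is_tree m T}. tree_weight p m T / tree_partition p m)"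
    by (rule sum.cong) auto
  also have "\<dots> = 1"
    using Z by (simp add: sum_divide_distrib[symmetric] tree_partition_def)
  finally have total: "(\<integral>\<^sup>+T. ennreal (?f T) \<partial>count_space UNIV) = 1" by simp
  show ?thesis
    unfolding tree_pmf_def tree_partition_def[symmetric] using pmf_embed_pmf[OF nonneg total] by simp
qed

text \<open>A tree with \<open>k\<close> of its permitted edges present has weight \<open>(p/(1-p))^k\<close>:
  the factor \<open>(1-p)^(-a(T))\<close> cancels since \<open>a(T)\<close> is the number of permitted edges.\<close>
lemma tree_weight_extension:
  assumes T: "is_tree m T" and m: "1 \<le> m" and p: "0 < p" "p < 1"
    and k: "k \<le> card (permitted m T)"
  shows "tree_weight p m T * (p ^ k * (1 - p) ^ (card (permitted m T) - k)) = (p / (1 - p)) ^ k"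
proof -
  let ?a = "card (permitted m T)"
  have q: "0 < 1 - p" using p by simp
  have "tree_weight p m T = (1 - p) powr (- real ?a)"
    unfolding tree_weight_def using card_permitted[OF T m] by (metis of_int_of_nat_eq)
  also have "\<dots> = 1 / ((1 - p) ^ k * (1 - p) ^ (?a - k))"
    using q k by (simp add: powr_minus powr_realpow power_add[symmetric] divide_inverse)
  finally show ?thesis using q by (simp add: power_divide)
qed

definition tree_extension :: "real \<Rightarrow> nat \<Rightarrow> nat set set \<Rightarrow> nat set set pmf" where
  "tree_extension p m T = map_pmf (\<lambda>S. T \<union> S) (random_subset p (permitted m T))"

lemma graph_pmf_eq: "graph_pmf p m = tree_pmf p m \<bind> tree_extension p m"
  unfolding graph_pmf_def tree_extension_def[abs_def] random_subset_def
  by (simp add: map_pmf_def bind_assoc_pmf bind_return_pmf)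

lemma pmf_tree_extension:
  assumes T: "is_tree m T" and m: "1 \<le> m" and p: "0 \<le> p" "p \<le> 1"
  shows "pmf (tree_extension p m T) G =
    (if connected_graph m G \<and> dfs_tree G m = T
     then p ^ card (G - T) * (1 - p) ^ (card (permitted m T) - card (G - T)) else 0)"
proof -
  have "finite (permitted m T)"
    using connected_odfs.finite_permitted[OF tree_connected_odfs[OF T m]] .
  then show ?thesis
    using pmf_random_extension[OF _ p permitted_disjoint]
      odfs_decomposition[OF m T, of G]
    unfolding tree_extension_def by simp
qed

lemma pmf_graph_pmf_dfs_tree:
  assumes p: "0 < p" "p < 1" and m: "1 \<le> m"
  shows "pmf (graph_pmf p m) G = (if connected_graph m G
    then pmf (tree_pmf p m) (dfs_tree G m) * pmf (tree_extension p m (dfs_tree G m)) G else 0)"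
proof -
  let ?h = "\<lambda>T. pmf (tree_pmf p m) T * pmf (tree_extension p m T) G"
  have "set_pmf (tree_pmf p m) \<subseteq> {T. is_tree m T}"
    using pmf_tree_pmf[OF p m] by (auto simp: set_pmf_iff split: if_splits)
  then have "pmf (graph_pmf p m) G = (\<Sum>T\<in>{T. is_tree m T}. ?h T)"
    unfolding graph_pmf_eq pmf_bind
    by (subst integral_measure_pmf[OF finite_trees]) auto
  also have "\<dots> = (\<Sum>T\<in>{T. is_tree m T}. if connected_graph m G \<and> T = dfs_tree G m then ?h T else 0)"
    using pmf_tree_extension[OF _ m] p by (intro sum.cong refl) auto
  also have "\<dots> = (if connected_graph m G then ?h (dfs_tree G m) else 0)"
    using connected_odfs.dfs_tree_is_tree[of m G] m finite_trees
    by (auto simp: connected_odfs_def sum.delta')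
  finally show ?thesis .
qed

lemma pmf_graph_pmf:
  assumes p: "0 < p" "p < 1" and m: "1 \<le> m"
  shows "pmf (graph_pmf p m) G =
    (if connected_graph m G then (p / (1 - p)) ^ (card G - (m - 1)) / tree_partition p m else 0)"
proof (cases "connected_graph m G")
  case True
  interpret connected_odfs m G using True m by unfold_locales
  let ?T = "dfs_tree G m"
  have T: "is_tree m ?T" by (rule dfs_tree_is_tree)
  have fin_P: "finite (permitted m ?T)"
    using connected_odfs.finite_permitted[OF tree_connected_odfs[OF T m]] .
  have dec: "?T \<subseteq> G" "G - ?T \<subseteq> permitted m ?T" using odfs_decomposition[OF m T] True by auto
  have k: "card (G - ?T) = card G - (m - 1)"
    using card_Diff_subset[OF finite_subset[OF dec(1) finite_graph[OF graph]] dec(1)] T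
    by (simp add: is_tree_def)
  have k_le: "card (G - ?T) \<le> card (permitted m ?T)" using card_mono[OF fin_P dec(2)] .
  have "pmf (graph_pmf p m) G = tree_weight p m ?T *
      (p ^ card (G - ?T) * (1 - p) ^ (card (permitted m ?T) - card (G - ?T))) / tree_partition p m"
    using pmf_graph_pmf_dfs_tree[OF p m] pmf_tree_pmf[OF p m] pmf_tree_extension[OF T m] T True p
    by simp
  then show ?thesis using tree_weight_extension[OF T m p k_le] True k by simp
qed (simp add: pmf_graph_pmf_dfs_tree[OF p m])

section \<open>Conditioning on the surplus\<close>

lemma cond_pmf_eq_pmf_of_set:
  assumes fin: "finite C" and CA: "C \<subseteq> A"
    and const: "\<And>x. x \<in> C \<Longrightarrow> pmf M x = c" and zero: "\<And>x. x \<in> A - C \<Longrightarrow> pmf M x = 0"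
    and pos: "measure_pmf.prob M A > 0"
  shows "cond_pmf M A = pmf_of_set C"
proof -
  have "measure_pmf.prob M (A - C) = 0"
    using zero by (auto simp: measure_pmf_zero_iff set_pmf_iff)
  moreover have "A = C \<union> (A - C)" using CA by auto
  then have "measure_pmf.prob M A = measure_pmf.prob M C + measure_pmf.prob M (A - C)"
    by (metis Diff_disjoint measure_pmf.finite_measure_Union sets_measure_pmf UNIV_I)
  moreover have "measure_pmf.prob M C = real (card C) * c"
    using fin const by (simp add: measure_measure_pmf_finite)
  ultimately have mass: "measure_pmf.prob M A = real (card C) * c" by simp
  with pos have C_ne: "C \<noteq> {}" by auto
  then have "0 < real (card C)" using fin by (simp add: card_gt_0_iff)
  then have c_pos: "0 < c" using pos mass by (simp add: zero_less_mult_iff)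
  obtain x where "x \<in> C" using C_ne by blast
  then have "x \<in> set_pmf M \<inter> A" using const CA c_pos by (auto simp: set_pmf_iff)
  then have support: "set_pmf M \<inter> A \<noteq> {}" by blast
  show ?thesis
  proof (rule pmf_eqI)
    fix x
    show "pmf (cond_pmf M A) x = pmf (pmf_of_set C) x"
      unfolding pmf_cond[OF support] pmf_of_set[OF C_ne fin] mass
      using const zero CA c_pos by (auto simp: indicator_def)
  qed
qed

text \<open>By the law above, all these graphs have the same
  probability and every other graph of surplus \<open>k\<close> has probability zero.\<close>
theorem corollary4:
  fixes p :: real and m k :: nat
  assumes "0 < p" and "p < 1" and "1 \<le> m"
    and "measure_pmf.prob (graph_pmf p m) {G. surplus m G = int k} > 0"
  shows "cond_pmf (graph_pmf p m) {G. surplus m G = int k} =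
         pmf_of_set {G. connected_graph m G \<and> card G = m + k - 1}"
proof (rule cond_pmf_eq_pmf_of_set)
  have surplus: "surplus m G = int k \<longleftrightarrow> card G = m + k - 1" for G
    using assms(3) unfolding surplus_def by auto
  show "finite {G. connected_graph m G \<and> card G = m + k - 1}"
    using finite_graphs[of m] by (simp add: connected_graph_def conj_assoc)
  show "{G. connected_graph m G \<and> card G = m + k - 1} \<subseteq> {G. surplus m G = int k}"
    using surplus by auto
  show "pmf (graph_pmf p m) G = (p / (1 - p)) ^ k / tree_partition p m"
    if "G \<in> {G. connected_graph m G \<and> card G = m + k - 1}" for G
    using that pmf_graph_pmf[OF assms(1-3)] assms(3) by simp
  show "pmf (graph_pmf p m) G = 0"
    if "G \<in> {G. surplus m G = int k} - {G. connected_graph m G \<and> card G = m + k - 1}" for G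
    using that pmf_graph_pmf[OF assms(1-3)] surplus by auto
qed (fact assms(4))

end
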